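(* Let $\pi_1,\pi_2$ be probability vectors on the finite set $E$ with strictly positive entries, and take $P_{x,x'}=\pi_1(x')$, $Q_{y,y'}=\pi_2(y')$ for all $x,x',y,y'\in E$. Let $f:E\times E\to\mathbb Z$ with $\pi_1\otimes\pi_2(f)<0$ and $f(x,y)>0$ for some $(x,y)$. Then $\theta^*>0$ solves $\sum_{x,y}e^{\theta f(x,y)}\pi_1(x)\pi_2(y)=1$, $\pi^*(x,y)=e^{\theta^*f(x,y)}\pi_1(x)\pi_2(y)$, and with $\pi^*_1,\pi^*_2$ the marginals of $\pi^*$, $$J_1=2\theta^*\pi^*(f)-H(\pi^*_1\mid\pi_1),\qquad J_2=2\theta^*\pi^*(f)-H(\pi^*_2\mid\pi_2).$$ Consequently $2\min\{J_1,J_2\}>3\theta^*\pi^*(f)$ holds if and only if $$H(\pi^*\mid\pi_1\otimes\pi_2)>2\max\{H(\pi^*_1\mid\pi_1),H(\pi^*_2\mid\pi_2)\}.$$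
   Context: $H(\alpha\mid\beta)=\sum_z\alpha(z)\log(\alpha(z)/\beta(z))$ is relative entropy; $\nu(f)=\sum f\,d\nu$. For general irreducible stochastic $P,Q$ on $E$: $\Phi(\theta)_{(x,y),(x',y')}=e^{\theta f(x',y')}P_{x,x'}Q_{y,y'}$ with spectral radius $\varphi(\theta)$; $\theta^*>0$ is the unique positive solution of $\varphi(\theta)=1$; $r^*$ a positive right eigenvector of $\Phi(\theta^* )$ for eigenvalue $1$; $R^*_{(x,y),(x',y')}=\frac{r^*(x',y')}{r^*(x,y)}\Phi(\theta^* )_{(x,y),(x',y')}$; $\pi^*$ its invariant probability vector; $\hat\pi(x,y,x',y')=\pi^*(x,y)R^*_{(x,y),(x',y')}$; $f$ is also regarded as a function on $E^2\times E^2$ by $f(x,y,x',y')=f(x',y')$. For $g:E^2\times E^2\to\mathbb R$, $\varphi_1(g),\varphi_2(g)$ are the spectral radii of $\Phi_1(g)_{(x,y,z),(x',y',z')}=\exp(g(x,y,x',y')+g(x,z,x',z'))P_{x,x'}Q_{y,y'}Q_{z,z'}$ and $\Phi_2(g)_{(x,w,y),(x',w',y')}=\exp(g(x,y,x',y')+g(w,y,w',y'))P_{x,x'}P_{w,w'}Q_{y,y'}$, and $J_i=\sup_g\{2\hat\pi(g)-\log\varphi_i(g)\}$, $i=1,2$. *)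

theory Defs
  imports Complex_Main "HOL-Library.Extended_Real"
begin

definition spectral_radius :: "('i::finite \<Rightarrow> 'i \<Rightarrow> real) \<Rightarrow> real" where
  "spectral_radius M = Sup {cmod z | z. \<exists>v::'i \<Rightarrow> complex. v \<noteq> (\<lambda>_. 0) \<and>
      (\<forall>i. (\<Sum>j\<in>UNIV. complex_of_real (M i j) * v j) = z * v i)}"

definition rel_entropy :: "('z::finite \<Rightarrow> real) \<Rightarrow> ('z \<Rightarrow> real) \<Rightarrow> real" where
  "rel_entropy \<alpha> \<beta> = (\<Sum>z\<in>UNIV. \<alpha> z * ln (\<alpha> z / \<beta> z))"

definition integ :: "('z::finite \<Rightarrow> real) \<Rightarrow> ('z \<Rightarrow> real) \<Rightarrow> real" where
  "integ \<nu> g = (\<Sum>z\<in>UNIV. \<nu> z * g z)"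

definition Phi :: "('a \<Rightarrow> 'a \<Rightarrow> real) \<Rightarrow> ('a \<Rightarrow> 'a \<Rightarrow> real) \<Rightarrow> ('a \<times> 'a \<Rightarrow> int)
    \<Rightarrow> real \<Rightarrow> 'a \<times> 'a \<Rightarrow> 'a \<times> 'a \<Rightarrow> real" where
  "Phi P Q f \<theta> = (\<lambda>(x, y) (x', y'). exp (\<theta> * real_of_int (f (x', y'))) * P x x' * Q y y')"

definition varphi :: "('a::finite \<Rightarrow> 'a \<Rightarrow> real) \<Rightarrow> ('a \<Rightarrow> 'a \<Rightarrow> real) \<Rightarrow> ('a \<times> 'a \<Rightarrow> int)
    \<Rightarrow> real \<Rightarrow> real" where
  "varphi P Q f \<theta> = spectral_radius (Phi P Q f \<theta>)"

definition theta_star :: "('a::finite \<Rightarrow> 'a \<Rightarrow> real) \<Rightarrow> ('a \<Rightarrow> 'a \<Rightarrow> real) \<Rightarrow> ('a \<times> 'a \<Rightarrow> int) \<Rightarrow> real" where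
  "theta_star P Q f = (THE \<theta>. \<theta> > 0 \<and> varphi P Q f \<theta> = 1)"

definition r_star :: "('a::finite \<Rightarrow> 'a \<Rightarrow> real) \<Rightarrow> ('a \<Rightarrow> 'a \<Rightarrow> real) \<Rightarrow> ('a \<times> 'a \<Rightarrow> int) \<Rightarrow> 'a \<times> 'a \<Rightarrow> real" where
  "r_star P Q f = (SOME r. (\<forall>u. r u > 0) \<and>
      (\<forall>u. (\<Sum>w\<in>UNIV. Phi P Q f (theta_star P Q f) u w * r w) = r u))"

definition R_star :: "('a::finite \<Rightarrow> 'a \<Rightarrow> real) \<Rightarrow> ('a \<Rightarrow> 'a \<Rightarrow> real) \<Rightarrow> ('a \<times> 'a \<Rightarrow> int)
    \<Rightarrow> 'a \<times> 'a \<Rightarrow> 'a \<times> 'a \<Rightarrow> real" where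
  "R_star P Q f u w = r_star P Q f w / r_star P Q f u * Phi P Q f (theta_star P Q f) u w"

definition pi_star :: "('a::finite \<Rightarrow> 'a \<Rightarrow> real) \<Rightarrow> ('a \<Rightarrow> 'a \<Rightarrow> real) \<Rightarrow> ('a \<times> 'a \<Rightarrow> int) \<Rightarrow> 'a \<times> 'a \<Rightarrow> real" where
  "pi_star P Q f = (SOME p. (\<forall>u. p u \<ge> 0) \<and> (\<Sum>u\<in>UNIV. p u) = 1 \<and>
      (\<forall>w. (\<Sum>u\<in>UNIV. p u * R_star P Q f u w) = p w))"

definition pi_hat :: "('a::finite \<Rightarrow> 'a \<Rightarrow> real) \<Rightarrow> ('a \<Rightarrow> 'a \<Rightarrow> real) \<Rightarrow> ('a \<times> 'a \<Rightarrow> int)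
    \<Rightarrow> ('a \<times> 'a) \<times> ('a \<times> 'a) \<Rightarrow> real" where
  "pi_hat P Q f = (\<lambda>(u, w). pi_star P Q f u * R_star P Q f u w)"

definition Phi1 :: "('a \<Rightarrow> 'a \<Rightarrow> real) \<Rightarrow> ('a \<Rightarrow> 'a \<Rightarrow> real) \<Rightarrow> (('a \<times> 'a) \<times> ('a \<times> 'a) \<Rightarrow> real)
    \<Rightarrow> 'a \<times> 'a \<times> 'a \<Rightarrow> 'a \<times> 'a \<times> 'a \<Rightarrow> real" where
  "Phi1 P Q g = (\<lambda>(x, y, z) (x', y', z').
     exp (g ((x, y), (x', y')) + g ((x, z), (x', z'))) * P x x' * Q y y' * Q z z')"

definition Phi2 :: "('a \<Rightarrow> 'a \<Rightarrow> real) \<Rightarrow> ('a \<Rightarrow> 'a \<Rightarrow> real) \<Rightarrow> (('a \<times> 'a) \<times> ('a \<times> 'a) \<Rightarrow> real)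
    \<Rightarrow> 'a \<times> 'a \<times> 'a \<Rightarrow> 'a \<times> 'a \<times> 'a \<Rightarrow> real" where
  "Phi2 P Q g = (\<lambda>(x, w, y) (x', w', y').
     exp (g ((x, y), (x', y')) + g ((w, y), (w', y'))) * P x x' * P w w' * Q y y')"

definition J1 :: "('a::finite \<Rightarrow> 'a \<Rightarrow> real) \<Rightarrow> ('a \<Rightarrow> 'a \<Rightarrow> real) \<Rightarrow> ('a \<times> 'a \<Rightarrow> int) \<Rightarrow> ereal" where
  "J1 P Q f = (SUP g. ereal (2 * integ (pi_hat P Q f) g - ln (spectral_radius (Phi1 P Q g))))"

definition J2 :: "('a::finite \<Rightarrow> 'a \<Rightarrow> real) \<Rightarrow> ('a \<Rightarrow> 'a \<Rightarrow> real) \<Rightarrow> ('a \<times> 'a \<Rightarrow> int) \<Rightarrow> ereal" where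
  "J2 P Q f = (SUP g. ereal (2 * integ (pi_hat P Q f) g - ln (spectral_radius (Phi2 P Q g))))"

end

theory Submission
  imports Defs "HOL-Analysis.Analysis"
begin

text \<open>Because \<open>P\<close> and \<open>Q\<close> have identical rows, so do \<open>\<Phi>(\<theta>)\<close> and \<open>R*\<close>, and everything is explicit:
  \<open>\<phi>(\<theta>)\<close> is the row sum \<open>\<Sum> e\<^sup>\<theta>\<^sup>f \<pi>\<^sub>1\<otimes>\<pi>\<^sub>2\<close>, a convex function that starts at \<open>1\<close> with negative
  slope and is unbounded, so it has a unique positive root \<open>\<theta>*\<close>; \<open>r*\<close> is constant and \<open>\<pi>*\<close> is the
  tilted law \<open>e\<^sup>\<theta>\<^sup>*\<^sup>f \<pi>\<^sub>1\<otimes>\<pi>\<^sub>2\<close>, whence \<open>H(\<pi>* | \<pi>\<^sub>1\<otimes>\<pi>\<^sub>2) = \<theta>* \<pi>*(f)\<close>.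

  For \<open>J\<^sub>1\<close>: a positive matrix \<open>M\<close> and a positive probability \<open>\<nu>\<close> satisfy
  \<open>\<Sum> \<nu>\<^sub>i \<nu>\<^sub>j ln (M\<^sub>i\<^sub>j / \<nu>\<^sub>j) \<le> ln \<rho>(M)\<close> (Perron eigenvector and Jensen). Taking for \<open>\<nu>\<close> two copies of
  \<open>\<pi>*\<close> glued along their first coordinate, the left side for \<open>M = \<Phi>\<^sub>1(g)\<close> is
  \<open>2 pi_hat(g) - 2 H(\<pi>* | \<pi>\<^sub>1\<otimes>\<pi>\<^sub>2) + H(\<pi>*\<^sub>1 | \<pi>\<^sub>1)\<close>, with equality for the \<open>g\<close> that gives \<open>\<Phi>\<^sub>1(g)\<close>
  identical rows \<open>\<nu>\<close>. Hence \<open>J\<^sub>1 = 2 H(\<pi>* | \<pi>\<^sub>1\<otimes>\<pi>\<^sub>2) - H(\<pi>*\<^sub>1 | \<pi>\<^sub>1)\<close>, likewise for \<open>J\<^sub>2\<close> with the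
  second coordinate, and the final equivalence is arithmetic.\<close>

section \<open>Spectral radius\<close>

definition eigenpair :: "('i::finite \<Rightarrow> 'i \<Rightarrow> real) \<Rightarrow> complex \<Rightarrow> ('i \<Rightarrow> complex) \<Rightarrow> bool" where
  "eigenpair M z v \<longleftrightarrow> v \<noteq> (\<lambda>_. 0) \<and> (\<forall>i. (\<Sum>j\<in>UNIV. complex_of_real (M i j) * v j) = z * v i)"

lemma spectral_radius_eigenpair: "spectral_radius M = Sup {cmod z | z. \<exists>v. eigenpair M z v}"
  unfolding spectral_radius_def eigenpair_def by simp

lemma eigenpair_norm_le_row_sum:
  fixes M :: "'i::finite \<Rightarrow> 'i \<Rightarrow> real"
  assumes "eigenpair M z v"
  obtains i where "cmod z \<le> (\<Sum>j\<in>UNIV. \<bar>M i j\<bar>)"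
proof -
  have v0: "v \<noteq> (\<lambda>_. 0)" and ev: "\<And>i. (\<Sum>j\<in>UNIV. complex_of_real (M i j) * v j) = z * v i"
    using assms by (auto simp: eigenpair_def)
  define m where "m = Max (range (\<lambda>j. cmod (v j)))"
  have m_ge: "cmod (v j) \<le> m" for j
    unfolding m_def by (rule Max_ge) auto
  have "m \<in> range (\<lambda>j. cmod (v j))"
    unfolding m_def by (rule Max_in) auto
  then obtain i where i: "cmod (v i) = m"
    by auto
  have "m > 0"
    using v0 m_ge by (metis (no_types) ext norm_le_zero_iff not_less order.trans)
  have "cmod z * m = cmod (\<Sum>j\<in>UNIV. complex_of_real (M i j) * v j)"
    using i ev by (simp add: norm_mult)
  also have "\<dots> \<le> (\<Sum>j\<in>UNIV. \<bar>M i j\<bar> * m)"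
    by (rule order.trans[OF norm_sum sum_mono]) (auto simp: norm_mult intro!: mult_left_mono m_ge)
  also have "\<dots> = (\<Sum>j\<in>UNIV. \<bar>M i j\<bar>) * m"
    by (simp add: sum_distrib_right)
  finally show ?thesis
    using \<open>m > 0\<close> that by simp
qed

lemma norm_eigenvalue_le_spectral_radius:
  fixes M :: "'i::finite \<Rightarrow> 'i \<Rightarrow> real"
  assumes "eigenpair M z v"
  shows "cmod z \<le> spectral_radius M"
  unfolding spectral_radius_eigenpair
proof (rule cSup_upper)
  show "cmod z \<in> {cmod z |z. \<exists>v. eigenpair M z v}"
    using assms by blast
  have "cmod z' \<le> (\<Sum>i\<in>UNIV. \<Sum>j\<in>UNIV. \<bar>M i j\<bar>)" if eig: "eigenpair M z' v'" for z' v'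
  proof -
    obtain i where "cmod z' \<le> (\<Sum>j\<in>UNIV. \<bar>M i j\<bar>)"
      using eigenpair_norm_le_row_sum[OF eig] by blast
    also have "\<dots> \<le> (\<Sum>i\<in>UNIV. \<Sum>j\<in>UNIV. \<bar>M i j\<bar>)"
      by (rule member_le_sum) (auto intro!: sum_nonneg)
    finally show ?thesis .
  qed
  then show "bdd_above {cmod z |z. \<exists>v. eigenpair M z v}"
    by (auto intro!: bdd_aboveI)
qed

lemma spectral_radius_eqI:
  fixes M :: "'i::finite \<Rightarrow> 'i \<Rightarrow> real"
  assumes "eigenpair M z v" and "cmod z = c" and "\<And>z' v'. eigenpair M z' v' \<Longrightarrow> cmod z' \<le> c"
  shows "spectral_radius M = c"
proof (rule antisym)
  show "spectral_radius M \<le> c"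
    unfolding spectral_radius_eigenpair by (rule cSup_least) (use assms in auto)
  show "c \<le> spectral_radius M"
    using norm_eigenvalue_le_spectral_radius[OF assms(1)] assms(2) by simp
qed

lemma spectral_radius_identical_rows:
  fixes M :: "'i::finite \<Rightarrow> 'i \<Rightarrow> real"
  assumes M: "\<And>i j. M i j = c j" and c_nonneg: "\<And>j. c j \<ge> 0"
  shows "spectral_radius M = (\<Sum>j\<in>UNIV. c j)"
proof (rule spectral_radius_eqI)
  show "eigenpair M (complex_of_real (\<Sum>j\<in>UNIV. c j)) (\<lambda>_. 1)"
    unfolding eigenpair_def by (auto simp: M) (metis one_neq_zero)
  show "cmod (complex_of_real (\<Sum>j\<in>UNIV. c j)) = (\<Sum>j\<in>UNIV. c j)"
    using c_nonneg by (simp del: of_real_sum add: sum_nonneg)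
next
  fix z v assume "eigenpair M z v"
  then have v0: "v \<noteq> (\<lambda>_. 0)" and ev: "\<And>i. (\<Sum>j\<in>UNIV. complex_of_real (c j) * v j) = z * v i"
    by (auto simp: eigenpair_def M)
  define s where "s = (\<Sum>j\<in>UNIV. complex_of_real (c j) * v j)"
  show "cmod z \<le> (\<Sum>j\<in>UNIV. c j)"
  proof (cases "z = 0")
    case True
    then show ?thesis using c_nonneg by (simp add: sum_nonneg)
  next
    case False
    \<comment> \<open>every eigenvector for a nonzero eigenvalue is constant\<close>
    then have v: "v = (\<lambda>_. s / z)"
      using ev by (auto simp: s_def field_simps)
    then have "s \<noteq> 0"
      using v0 by auto
    have "s = complex_of_real (\<Sum>j\<in>UNIV. c j) * s / z"
      by (subst (1) s_def) (simp add: v sum_distrib_right sum_divide_distrib[symmetric])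
    then have "z = complex_of_real (\<Sum>j\<in>UNIV. c j)"
      using \<open>s \<noteq> 0\<close> False by (simp add: field_simps)
    then show ?thesis
      using c_nonneg by (simp del: of_real_sum add: sum_nonneg)
  qed
qed

text \<open>Perron's theorem, existence part: the normalised map \<open>x \<mapsto> M x / \<Sum>(M x)\<close> sends the
  standard simplex into itself, and a Brouwer fixed point is a positive eigenvector.\<close>

lemma positive_matrix_has_positive_eigenvector:
  fixes M :: "'i::finite \<Rightarrow> 'i \<Rightarrow> real"
  assumes M_pos: "\<And>i j. M i j > 0"
  obtains l v where "l > 0" "\<And>i. v i > 0" "\<And>i. (\<Sum>j\<in>UNIV. M i j * v j) = l * v i"
proof -
  have M_nonneg: "M i j \<ge> 0" for i j
    using M_pos less_imp_le by blast
  define S where "S = {x::real^'i. (\<forall>i. 0 \<le> x$i) \<and> sum (\<lambda>i. x$i) UNIV = 1}"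
  define D where "D = (\<lambda>x::real^'i. \<Sum>k\<in>UNIV. \<Sum>j\<in>UNIV. M k j * x$j)"
  define F where "F = (\<lambda>x::real^'i. \<chi> i. (\<Sum>j\<in>UNIV. M i j * x$j) / D x)"
  have row_pos: "(\<Sum>j\<in>UNIV. M i j * x$j) > 0" if "x \<in> S" for x i
  proof -
    have x0: "\<forall>i. 0 \<le> x$i" and x1: "sum (\<lambda>i. x$i) UNIV = 1"
      using that by (auto simp: S_def)
    obtain j0 where "x$j0 \<noteq> 0"
      using x1 by (metis (mono_tags, lifting) sum.neutral zero_neq_one)
    then have "M i j0 * x$j0 > 0"
      using x0 M_pos by (simp add: order_less_le)
    also have "M i j0 * x$j0 \<le> (\<Sum>j\<in>UNIV. M i j * x$j)"
      by (rule member_le_sum) (use x0 M_nonneg in auto)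
    finally show ?thesis .
  qed
  have D_pos: "D x > 0" if "x \<in> S" for x
    unfolding D_def by (rule sum_pos) (use row_pos[OF that] in auto)
  have "closed S"
    unfolding S_def
    by (intro closed_Collect_conj closed_Collect_all closed_Collect_le closed_Collect_eq continuous_intros)
  moreover have "bounded S"
  proof -
    have "norm x \<le> 1" if "x \<in> S" for x
      using norm_le_l1_cart[of x] that by (auto simp: S_def)
    then show ?thesis
      unfolding bounded_iff by blast
  qed
  ultimately have "compact S"
    using compact_eq_bounded_closed by blast
  moreover have "convex S"
    unfolding S_def convex_def by (auto simp: sum.distrib sum_distrib_left[symmetric])
  moreover have "(\<chi> i::'i. 1 / real CARD('i)) \<in> S"
    by (simp add: S_def)
  then have "S \<noteq> {}"
    by blast
  moreover have "continuous_on S F"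
    unfolding F_def D_def by (intro continuous_intros) (use D_pos[unfolded D_def] in force)
  moreover have "F \<in> S \<rightarrow> S"
  proof
    fix x assume "x \<in> S"
    then show "F x \<in> S"
      using D_pos[of x] row_pos[of x]
      by (simp add: S_def F_def sum_divide_distrib[symmetric] less_imp_le, simp add: D_def)
  qed
  ultimately obtain x where x: "x \<in> S" "F x = x"
    by (rule brouwer)
  have fix_eq: "(\<Sum>j\<in>UNIV. M i j * x$j) / D x = x$i" for i
  proof -
    have "F x $ i = x $ i"
      using x(2) by simp
    then show ?thesis
      by (simp add: F_def)
  qed
  show ?thesis
  proof (rule that[of "D x" "\<lambda>i. x$i"])
    show "D x > 0"
      using D_pos[OF x(1)] .
    show "(\<Sum>j\<in>UNIV. M i j * x$j) = D x * x$i" for i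
      using fix_eq[of i] D_pos[OF x(1)] by (simp add: field_simps)
    show "x$i > 0" for i
      using fix_eq[of i] divide_pos_pos[OF row_pos[of x i, OF x(1)] D_pos[OF x(1)]] by simp
  qed
qed

lemma ln_spectral_radius_ge:
  fixes M :: "'i::finite \<Rightarrow> 'i \<Rightarrow> real" and \<nu> :: "'i \<Rightarrow> real"
  assumes M_pos: "\<And>i j. M i j > 0" and \<nu>_pos: "\<And>i. \<nu> i > 0" and \<nu>_sum: "(\<Sum>i\<in>UNIV. \<nu> i) = 1"
  shows "(\<Sum>i\<in>UNIV. \<Sum>j\<in>UNIV. \<nu> i * \<nu> j * ln (M i j / \<nu> j)) \<le> ln (spectral_radius M)"
proof -
  obtain l v where l: "l > 0" and v_pos: "\<And>i. v i > 0" and ev: "\<And>i. (\<Sum>j\<in>UNIV. M i j * v j) = l * v i"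
    using positive_matrix_has_positive_eigenvector[of M] M_pos by blast
  have "eigenpair M (complex_of_real l) (\<lambda>i. complex_of_real (v i))"
    unfolding eigenpair_def
  proof (intro conjI allI)
    show "(\<lambda>i. complex_of_real (v i)) \<noteq> (\<lambda>_. 0)"
      using v_pos[of undefined] by (metis less_irrefl of_real_0 of_real_eq_iff)
    show "(\<Sum>j\<in>UNIV. complex_of_real (M i j) * complex_of_real (v j)) = complex_of_real l * complex_of_real (v i)" for i
      using ev[of i] by (simp flip: of_real_mult of_real_sum)
  qed
  then have "l \<le> spectral_radius M"
    using norm_eigenvalue_le_spectral_radius l by (metis abs_of_pos norm_of_real)
  \<comment> \<open>Jensen's inequality for \<open>ln\<close> applied to the eigenvalue equation of row \<open>i\<close>\<close>
  have row: "(\<Sum>j\<in>UNIV. \<nu> j * (ln (M i j / \<nu> j) + ln (v j))) \<le> ln l + ln (v i)" for i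
  proof -
    have "(\<Sum>j\<in>UNIV. \<nu> j * (ln (M i j / \<nu> j) + ln (v j))) = (\<Sum>j\<in>UNIV. \<nu> j * ln (M i j * v j / \<nu> j))"
    proof (intro sum.cong refl)
      fix j
      have "ln (M i j * v j / \<nu> j) = ln (M i j / \<nu> j * v j)"
        by simp
      also have "\<dots> = ln (M i j / \<nu> j) + ln (v j)"
        using M_pos \<nu>_pos v_pos by (intro ln_mult_pos divide_pos_pos)
      finally show "\<nu> j * (ln (M i j / \<nu> j) + ln (v j)) = \<nu> j * ln (M i j * v j / \<nu> j)"
        by simp
    qed
    also have "\<dots> \<le> ln (\<Sum>j\<in>UNIV. \<nu> j *\<^sub>R (M i j * v j / \<nu> j))"
      by (rule concave_on_sum[OF _ _ ln_concave]) (use M_pos \<nu>_pos v_pos \<nu>_sum in \<open>auto intro: less_imp_le\<close>)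
    also have "(\<Sum>j\<in>UNIV. \<nu> j *\<^sub>R (M i j * v j / \<nu> j)) = l * v i"
      using \<nu>_pos ev by (simp add: less_imp_neq[symmetric])
    also have "ln (l * v i) = ln l + ln (v i)"
      using l v_pos[of i] by (simp add: ln_mult)
    finally show ?thesis .
  qed
  have "(\<Sum>i\<in>UNIV. \<nu> i * (\<Sum>j\<in>UNIV. \<nu> j * (ln (M i j / \<nu> j) + ln (v j))))
      \<le> (\<Sum>i\<in>UNIV. \<nu> i * (ln l + ln (v i)))"
    by (intro sum_mono mult_left_mono row) (use \<nu>_pos in \<open>auto intro: less_imp_le\<close>)
  then have "(\<Sum>i\<in>UNIV. \<Sum>j\<in>UNIV. \<nu> i * \<nu> j * ln (M i j / \<nu> j)) \<le> ln l"
    using \<nu>_sum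
    by (simp add: distrib_left sum.distrib sum_distrib_left[symmetric] sum_distrib_right[symmetric] mult.assoc)
  also have "ln l \<le> ln (spectral_radius M)"
    using l \<open>l \<le> spectral_radius M\<close> by simp
  finally show ?thesis .
qed

section \<open>Exponential moments\<close>

lemma exp_moment_convex:
  fixes c F :: "'k \<Rightarrow> real"
  assumes c_nonneg: "\<And>k. k \<in> K \<Longrightarrow> c k \<ge> 0" and "0 \<le> t" "t \<le> 1"
  shows "(\<Sum>k\<in>K. c k * exp (((1 - t) * x + t * y) * F k))
    \<le> (1 - t) * (\<Sum>k\<in>K. c k * exp (x * F k)) + t * (\<Sum>k\<in>K. c k * exp (y * F k))"
proof -
  have "c k * exp ((1 - t) * (x * F k) + t * (y * F k))
      \<le> (1 - t) * (c k * exp (x * F k)) + t * (c k * exp (y * F k))" if "k \<in> K" for k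
    using mult_left_mono[OF convex_onD[OF exp_convex, of t "x * F k" "y * F k"] c_nonneg[OF that]] assms(2,3)
    by (simp add: algebra_simps)
  then show ?thesis
    by (simp add: sum_distrib_left sum.distrib[symmetric] algebra_simps sum_mono)
qed

lemma exp_moment_below_one_near_zero:
  fixes c F :: "'k \<Rightarrow> real"
  assumes c_sum: "(\<Sum>k\<in>K. c k) = 1" and neg_mean: "(\<Sum>k\<in>K. c k * F k) < 0"
  obtains d where "d > 0" "\<And>h. 0 < h \<Longrightarrow> h < d \<Longrightarrow> (\<Sum>k\<in>K. c k * exp (h * F k)) < 1"
proof -
  have "DERIV (\<lambda>\<theta>. \<Sum>k\<in>K. c k * exp (\<theta> * F k)) 0 :> (\<Sum>k\<in>K. c k * F k)"
    by (auto intro!: derivative_eq_intros simp: mult.commute)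
  from DERIV_neg_dec_right[OF this neg_mean] obtain d where
    "d > 0" "\<And>h. 0 < h \<Longrightarrow> h < d \<Longrightarrow> (\<Sum>k\<in>K. c k * exp (h * F k)) < (\<Sum>k\<in>K. c k * exp (0 * F k))"
    by auto
  then show ?thesis
    using that c_sum by simp
qed

lemma exp_moment_root_exists:
  fixes c F :: "'k \<Rightarrow> real"
  assumes "finite K" and c_pos: "\<And>k. k \<in> K \<Longrightarrow> c k > 0" and c_sum: "(\<Sum>k\<in>K. c k) = 1"
    and neg_mean: "(\<Sum>k\<in>K. c k * F k) < 0" and j: "j \<in> K" "F j > 0"
  obtains \<theta> where "\<theta> > 0" "(\<Sum>k\<in>K. c k * exp (\<theta> * F k)) = 1"
proof -
  define m where "m = (\<lambda>\<theta>. \<Sum>k\<in>K. c k * exp (\<theta> * F k))"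
  obtain d where d: "d > 0" and below_one: "\<And>h. 0 < h \<Longrightarrow> h < d \<Longrightarrow> m h < 1"
    using exp_moment_below_one_near_zero[OF c_sum neg_mean] unfolding m_def by blast
  have "c j * F j > 0"
    using c_pos[OF j(1)] j(2) by simp
  define h T where "h = d / 2" and "T = d / 2 + 1 / (c j * F j)"
  have "c j * (1 + T * F j) = c j * (1 + d / 2 * F j) + 1"
    using c_pos[OF j(1)] j(2) by (simp add: T_def field_simps)
  moreover have "0 \<le> c j * (1 + d / 2 * F j)"
    using d c_pos[OF j(1)] j(2) by (intro mult_nonneg_nonneg) auto
  moreover have "c j * (1 + T * F j) \<le> c j * exp (T * F j)"
    using c_pos[OF j(1)] by (simp add: exp_ge_add_one_self)
  moreover have "c j * exp (T * F j) \<le> m T"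
    unfolding m_def by (rule member_le_sum) (use j c_pos \<open>finite K\<close> in \<open>auto intro: less_imp_le\<close>)
  ultimately have "1 \<le> m T"
    by linarith
  moreover have "m h \<le> 1" "h \<le> T"
    using below_one[of h] d \<open>c j * F j > 0\<close> by (simp_all add: h_def T_def)
  moreover have "continuous_on {h..T} m"
    unfolding m_def by (intro continuous_intros)
  ultimately obtain \<theta> where "h \<le> \<theta>" "m \<theta> = 1"
    using IVT'[of m h 1 T] by blast
  with d show ?thesis
    by (intro that[of \<theta>]) (auto simp: m_def h_def)
qed

text \<open>A root \<open>a\<close> strictly between a point \<open>e\<close> near \<open>0\<close>, where the moment is below \<open>1\<close>, and a
  second root \<open>b\<close> would violate convexity.\<close>

lemma exp_moment_positive_root_unique:
  fixes c F :: "'k \<Rightarrow> real"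
  assumes c_nonneg: "\<And>k. k \<in> K \<Longrightarrow> c k \<ge> 0" and c_sum: "(\<Sum>k\<in>K. c k) = 1"
    and neg_mean: "(\<Sum>k\<in>K. c k * F k) < 0"
    and roots: "0 < a" "0 < b" "(\<Sum>k\<in>K. c k * exp (a * F k)) = 1" "(\<Sum>k\<in>K. c k * exp (b * F k)) = 1"
  shows "a = b"
proof -
  define m where "m = (\<lambda>\<theta>. \<Sum>k\<in>K. c k * exp (\<theta> * F k))"
  obtain d where d: "d > 0" and below_one: "\<And>h. 0 < h \<Longrightarrow> h < d \<Longrightarrow> m h < 1"
    using exp_moment_below_one_near_zero[OF c_sum neg_mean] unfolding m_def by blast
  have False if "0 < a" "a < b" "m a = 1" "m b = 1" for a b
  proof -
    define e where "e = min (d / 2) (a / 2)"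
    have "0 < e" "e < a" "m e < 1"
      using d that below_one by (auto simp: e_def)
    define t where "t = (a - e) / (b - e)"
    have t: "0 \<le> t" "t < 1"
      using \<open>e < a\<close> that by (simp_all add: t_def)
    have "t * (b - e) = a - e"
      using \<open>e < a\<close> that by (simp add: t_def)
    then have "a = (1 - t) * e + t * b"
      by (simp add: algebra_simps)
    then have "m a \<le> (1 - t) * m e + t * m b"
      unfolding m_def using c_nonneg t by (simp add: exp_moment_convex)
    moreover have "(1 - t) * m e < (1 - t) * 1"
      using \<open>m e < 1\<close> t by (intro mult_strict_left_mono) auto
    ultimately show False
      using \<open>m a = 1\<close> \<open>m b = 1\<close> by simp
  qed
  then show ?thesis
    using roots unfolding m_def by (cases a b rule: linorder_cases) auto
qed

lemma exp_moment_unique_positive_root: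
  fixes c F :: "'k \<Rightarrow> real"
  assumes "finite K" and c_pos: "\<And>k. k \<in> K \<Longrightarrow> c k > 0" and c_sum: "(\<Sum>k\<in>K. c k) = 1"
    and neg_mean: "(\<Sum>k\<in>K. c k * F k) < 0" and "j \<in> K" "F j > 0"
  shows "\<exists>!\<theta>. \<theta> > 0 \<and> (\<Sum>k\<in>K. c k * exp (\<theta> * F k)) = 1"
proof -
  obtain \<theta> where \<theta>: "\<theta> > 0" "(\<Sum>k\<in>K. c k * exp (\<theta> * F k)) = 1"
    by (rule exp_moment_root_exists[OF assms])
  have "\<And>k. k \<in> K \<Longrightarrow> c k \<ge> 0"
    using c_pos less_imp_le by blast
  note unique = exp_moment_positive_root_unique[OF this c_sum neg_mean]
  show ?thesis
    by (rule ex1I[of _ \<theta>]) (use \<theta> unique in auto)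
qed

section \<open>A variational formula for two copies of a law\<close>

lemma sum_UNIV_prod:
  "(\<Sum>u\<in>(UNIV::('a::finite \<times> 'b::finite) set). h u) = (\<Sum>x\<in>UNIV. \<Sum>y\<in>UNIV. h (x, y))"
  by (subst sum.cartesian_product) (simp add: case_prod_beta')

lemma integ_product:
  "integ (\<lambda>(u, w). \<mu> u * \<nu> w) g = (\<Sum>u\<in>UNIV. \<Sum>w\<in>UNIV. \<mu> u * \<nu> w * g (u, w))"
  by (simp add: integ_def sum_UNIV_prod)

lemma integ_product_snd:
  assumes "(\<Sum>u\<in>UNIV. \<mu> u) = 1"
  shows "integ (\<lambda>(u, w). \<mu> u * \<nu> w) (\<lambda>(u, w). \<phi> w) = integ \<nu> \<phi>"
  using assms unfolding integ_product by (simp add: integ_def mult.assoc flip: sum_product)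

lemma integ_pair_pushforward:
  assumes push: "\<And>\<phi>. integ \<nu> (\<lambda>i. \<phi> (a i)) = integ \<mu> \<phi>"
  shows "(\<Sum>i\<in>UNIV. \<Sum>j\<in>UNIV. \<nu> i * \<nu> j * G (a i, a j)) = integ (\<lambda>(u, w). \<mu> u * \<mu> w) G"
proof -
  have "(\<Sum>i\<in>UNIV. \<Sum>j\<in>UNIV. \<nu> i * \<nu> j * G (a i, a j)) = integ \<nu> (\<lambda>i. integ \<nu> (\<lambda>j. G (a i, a j)))"
    by (simp add: integ_def sum_distrib_left mult.assoc)
  also have "\<dots> = integ \<nu> (\<lambda>i. integ \<mu> (\<lambda>w. G (a i, w)))"
    using push[of "\<lambda>w. G (_, w)"] by simp
  also have "\<dots> = integ \<mu> (\<lambda>u. integ \<mu> (\<lambda>w. G (u, w)))"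
    using push[of "\<lambda>u. integ \<mu> (\<lambda>w. G (u, w))"] by simp
  also have "\<dots> = integ (\<lambda>(u, w). \<mu> u * \<mu> w) G"
    unfolding integ_product by (simp add: integ_def sum_distrib_left mult.assoc)
  finally show ?thesis .
qed

lemma two_copy_ln_spectral_radius_ge:
  fixes \<nu> :: "'i::finite \<Rightarrow> real" and a b :: "'i \<Rightarrow> 'u::finite"
  assumes \<nu>_pos: "\<And>i. \<nu> i > 0" and \<nu>_sum: "(\<Sum>i\<in>UNIV. \<nu> i) = 1"
    and push_a: "\<And>\<phi>. integ \<nu> (\<lambda>i. \<phi> (a i)) = integ \<mu> \<phi>"
    and push_b: "\<And>\<phi>. integ \<nu> (\<lambda>i. \<phi> (b i)) = integ \<mu> \<phi>"
  shows "2 * integ (\<lambda>(u, w). \<mu> u * \<mu> w) G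
    \<le> ln (spectral_radius (\<lambda>i j. \<nu> j * exp (G (a i, a j) + G (b i, b j))))"
proof -
  let ?M = "\<lambda>i j. \<nu> j * exp (G (a i, a j) + G (b i, b j))"
  have "ln (?M i j / \<nu> j) = G (a i, a j) + G (b i, b j)" for i j
    using \<nu>_pos[of j] by simp
  then have "(\<Sum>i\<in>UNIV. \<Sum>j\<in>UNIV. \<nu> i * \<nu> j * ln (?M i j / \<nu> j))
      = (\<Sum>i\<in>UNIV. \<Sum>j\<in>UNIV. \<nu> i * \<nu> j * G (a i, a j)) + (\<Sum>i\<in>UNIV. \<Sum>j\<in>UNIV. \<nu> i * \<nu> j * G (b i, b j))"
    by (simp add: distrib_left sum.distrib)
  also have "\<dots> = 2 * integ (\<lambda>(u, w). \<mu> u * \<mu> w) G"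
    using integ_pair_pushforward[OF push_a] integ_pair_pushforward[OF push_b] by simp
  finally show ?thesis
    using ln_spectral_radius_ge[of ?M \<nu>] \<nu>_pos \<nu>_sum by simp
qed

lemma two_copy_variational_formula:
  fixes M :: "('u::finite \<times> 'u \<Rightarrow> real) \<Rightarrow> 'i::finite \<Rightarrow> 'i \<Rightarrow> real"
    and \<nu> :: "'i \<Rightarrow> real" and \<mu> h :: "'u \<Rightarrow> real" and a b :: "'i \<Rightarrow> 'u"
  assumes \<nu>_pos: "\<And>i. \<nu> i > 0" and \<mu>_sum: "(\<Sum>u\<in>UNIV. \<mu> u) = 1"
    and push_a: "\<And>\<phi>. integ \<nu> (\<lambda>i. \<phi> (a i)) = integ \<mu> \<phi>"
    and push_b: "\<And>\<phi>. integ \<nu> (\<lambda>i. \<phi> (b i)) = integ \<mu> \<phi>"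
    and M_eq: "\<And>g i j. M g i j = \<nu> j * exp (g (a i, a j) + g (b i, b j) + h (a j) + h (b j))"
  shows "(SUP g. ereal (2 * integ (\<lambda>(u, w). \<mu> u * \<mu> w) g - ln (spectral_radius (M g))))
    = ereal (- 2 * integ \<mu> h)"
proof (rule antisym)
  have \<nu>_sum: "(\<Sum>i\<in>UNIV. \<nu> i) = 1"
    using push_a[of "\<lambda>_. 1"] \<mu>_sum by (simp add: integ_def)
  have integ_h: "integ (\<lambda>(u, w). \<mu> u * \<mu> w) (\<lambda>(u, w). h w) = integ \<mu> h"
    by (rule integ_product_snd[OF \<mu>_sum])
  show "(SUP g. ereal (2 * integ (\<lambda>(u, w). \<mu> u * \<mu> w) g - ln (spectral_radius (M g))))
      \<le> ereal (- 2 * integ \<mu> h)"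
  proof (rule SUP_least)
    fix g :: "'u \<times> 'u \<Rightarrow> real"
    define G where "G = (\<lambda>(u, w). g (u, w) + h w)"
    have "M g = (\<lambda>i j. \<nu> j * exp (G (a i, a j) + G (b i, b j)))"
      by (intro ext) (simp add: M_eq G_def add_ac)
    moreover have "integ (\<lambda>(u, w). \<mu> u * \<mu> w) G = integ (\<lambda>(u, w). \<mu> u * \<mu> w) g + integ \<mu> h"
      using integ_h by (simp add: G_def integ_def distrib_left sum.distrib case_prod_beta')
    ultimately show "ereal (2 * integ (\<lambda>(u, w). \<mu> u * \<mu> w) g - ln (spectral_radius (M g)))
        \<le> ereal (- 2 * integ \<mu> h)"
      using two_copy_ln_spectral_radius_ge[OF \<nu>_pos \<nu>_sum push_a push_b, of G] by simp
  qed
  define g0 where "g0 = (\<lambda>(u::'u, w). - h w)"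
  have "spectral_radius (M g0) = 1"
    using \<nu>_sum by (subst spectral_radius_identical_rows[of _ \<nu>]) (auto simp: M_eq g0_def less_imp_le \<nu>_pos)
  moreover have "integ (\<lambda>(u, w). \<mu> u * \<mu> w) g0 = integ \<mu> (\<lambda>w. - h w)"
    unfolding g0_def by (rule integ_product_snd[OF \<mu>_sum])
  moreover have "integ \<mu> (\<lambda>w. - h w) = - integ \<mu> h"
    by (simp add: integ_def sum_negf)
  ultimately show "ereal (- 2 * integ \<mu> h)
      \<le> (SUP g. ereal (2 * integ (\<lambda>(u, w). \<mu> u * \<mu> w) g - ln (spectral_radius (M g))))"
    by (intro SUP_upper2[of g0]) simp_all
qed

lemma integ_fst:
  "integ \<mu> (\<lambda>u. \<phi> (fst u)) = integ (\<lambda>x. \<Sum>y\<in>UNIV. \<mu> (x, y)) \<phi>"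
  by (simp add: integ_def sum_UNIV_prod sum_distrib_right)

lemma integ_snd:
  "integ \<mu> (\<lambda>u. \<phi> (snd u)) = integ (\<lambda>y. \<Sum>x\<in>UNIV. \<mu> (x, y)) \<phi>"
proof -
  have "integ \<mu> (\<lambda>u. \<phi> (snd u)) = (\<Sum>x\<in>UNIV. \<Sum>y\<in>UNIV. \<mu> (x, y) * \<phi> y)"
    by (simp add: integ_def sum_UNIV_prod)
  also have "\<dots> = (\<Sum>y\<in>UNIV. \<Sum>x\<in>UNIV. \<mu> (x, y) * \<phi> y)"
    by (rule sum.swap)
  finally show ?thesis
    by (simp add: integ_def sum_distrib_right)
qed

lemma sum_conditional_weight:
  fixes c :: "'a \<Rightarrow> real"
  assumes "(\<Sum>z\<in>A. c z) \<noteq> 0"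
  shows "(\<Sum>z\<in>A. c z * t / (\<Sum>z\<in>A. c z)) = t"
  using assms by (simp add: sum_divide_distrib[symmetric] sum_distrib_right[symmetric])

text \<open>Two copies of a law \<open>\<mu>\<close> on pairs, conditionally independent given their common first
  (resp. second) coordinate.\<close>

definition glue_fst :: "('a \<times> 'b::finite \<Rightarrow> real) \<Rightarrow> 'a \<times> 'b \<times> 'b \<Rightarrow> real" where
  "glue_fst \<mu> = (\<lambda>(x, y, z). \<mu> (x, y) * \<mu> (x, z) / (\<Sum>y'\<in>UNIV. \<mu> (x, y')))"

definition glue_snd :: "('a::finite \<times> 'b \<Rightarrow> real) \<Rightarrow> 'a \<times> 'a \<times> 'b \<Rightarrow> real" where
  "glue_snd \<mu> = (\<lambda>(x, w, y). \<mu> (x, y) * \<mu> (w, y) / (\<Sum>x'\<in>UNIV. \<mu> (x', y)))"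

lemma integ_glue_fst:
  fixes \<mu> :: "'a::finite \<times> 'b::finite \<Rightarrow> real"
  assumes "\<And>x. (\<Sum>y\<in>UNIV. \<mu> (x, y)) \<noteq> 0"
  shows "integ (glue_fst \<mu>) (\<lambda>i. \<phi> (fst i, fst (snd i))) = integ \<mu> \<phi>"
    and "integ (glue_fst \<mu>) (\<lambda>i. \<phi> (fst i, snd (snd i))) = integ \<mu> \<phi>"
proof -
  have "integ (glue_fst \<mu>) (\<lambda>i. \<phi> (fst i, fst (snd i)))
      = (\<Sum>x\<in>UNIV. \<Sum>y\<in>UNIV. \<Sum>z\<in>UNIV. \<mu> (x, z) * (\<mu> (x, y) * \<phi> (x, y)) / (\<Sum>z\<in>UNIV. \<mu> (x, z)))"
    unfolding integ_def sum_UNIV_prod by (intro sum.cong refl) (simp add: glue_fst_def mult_ac)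
  also have "\<dots> = integ \<mu> \<phi>"
    using assms by (simp add: sum_conditional_weight integ_def sum_UNIV_prod)
  finally show "integ (glue_fst \<mu>) (\<lambda>i. \<phi> (fst i, fst (snd i))) = integ \<mu> \<phi>" .
  have "integ (glue_fst \<mu>) (\<lambda>i. \<phi> (fst i, snd (snd i)))
      = (\<Sum>x\<in>UNIV. \<Sum>y\<in>UNIV. \<Sum>z\<in>UNIV. \<mu> (x, y) * (\<mu> (x, z) * \<phi> (x, z)) / (\<Sum>y\<in>UNIV. \<mu> (x, y)))"
    unfolding integ_def sum_UNIV_prod by (intro sum.cong refl) (simp add: glue_fst_def mult_ac)
  also have "\<dots> = (\<Sum>x\<in>UNIV. \<Sum>z\<in>UNIV. \<Sum>y\<in>UNIV. \<mu> (x, y) * (\<mu> (x, z) * \<phi> (x, z)) / (\<Sum>y\<in>UNIV. \<mu> (x, y)))"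
    by (intro sum.cong refl sum.swap)
  also have "\<dots> = integ \<mu> \<phi>"
    using assms by (simp add: sum_conditional_weight integ_def sum_UNIV_prod)
  finally show "integ (glue_fst \<mu>) (\<lambda>i. \<phi> (fst i, snd (snd i))) = integ \<mu> \<phi>" .
qed

lemma integ_glue_snd:
  fixes \<mu> :: "'a::finite \<times> 'b::finite \<Rightarrow> real"
  assumes "\<And>y. (\<Sum>x\<in>UNIV. \<mu> (x, y)) \<noteq> 0"
  shows "integ (glue_snd \<mu>) (\<lambda>i. \<phi> (fst i, snd (snd i))) = integ \<mu> \<phi>"
    and "integ (glue_snd \<mu>) (\<lambda>i. \<phi> (snd i)) = integ \<mu> \<phi>"
proof -
  have "integ (glue_snd \<mu>) (\<lambda>i. \<phi> (fst i, snd (snd i)))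
      = (\<Sum>x\<in>UNIV. \<Sum>w\<in>UNIV. \<Sum>y\<in>UNIV. \<mu> (w, y) * (\<mu> (x, y) * \<phi> (x, y)) / (\<Sum>w\<in>UNIV. \<mu> (w, y)))"
    unfolding integ_def sum_UNIV_prod by (intro sum.cong refl) (simp add: glue_snd_def mult_ac)
  also have "\<dots> = (\<Sum>x\<in>UNIV. \<Sum>y\<in>UNIV. \<Sum>w\<in>UNIV. \<mu> (w, y) * (\<mu> (x, y) * \<phi> (x, y)) / (\<Sum>w\<in>UNIV. \<mu> (w, y)))"
    by (intro sum.cong refl sum.swap)
  also have "\<dots> = integ \<mu> \<phi>"
    using assms by (simp add: sum_conditional_weight integ_def sum_UNIV_prod)
  finally show "integ (glue_snd \<mu>) (\<lambda>i. \<phi> (fst i, snd (snd i))) = integ \<mu> \<phi>" .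
  have "integ (glue_snd \<mu>) (\<lambda>i. \<phi> (snd i))
      = (\<Sum>x\<in>UNIV. \<Sum>w\<in>UNIV. \<Sum>y\<in>UNIV. \<mu> (x, y) * (\<mu> (w, y) * \<phi> (w, y)) / (\<Sum>x\<in>UNIV. \<mu> (x, y)))"
    unfolding integ_def sum_UNIV_prod by (intro sum.cong refl) (simp add: glue_snd_def mult_ac)
  also have "\<dots> = (\<Sum>w\<in>UNIV. \<Sum>x\<in>UNIV. \<Sum>y\<in>UNIV. \<mu> (x, y) * (\<mu> (w, y) * \<phi> (w, y)) / (\<Sum>x\<in>UNIV. \<mu> (x, y)))"
    by (rule sum.swap)
  also have "\<dots> = (\<Sum>w\<in>UNIV. \<Sum>y\<in>UNIV. \<Sum>x\<in>UNIV. \<mu> (x, y) * (\<mu> (w, y) * \<phi> (w, y)) / (\<Sum>x\<in>UNIV. \<mu> (x, y)))"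
    by (intro sum.cong refl sum.swap)
  also have "\<dots> = integ \<mu> \<phi>"
    using assms by (simp add: sum_conditional_weight integ_def sum_UNIV_prod)
  finally show "integ (glue_snd \<mu>) (\<lambda>i. \<phi> (snd i)) = integ \<mu> \<phi>" .
qed

section \<open>Kernels with identical rows\<close>

lemma rel_entropy_eq_integ: "rel_entropy \<alpha> \<beta> = integ \<alpha> (\<lambda>z. ln (\<alpha> z / \<beta> z))"
  by (simp add: rel_entropy_def integ_def)

lemma J1_identical_rows:
  fixes \<pi>1 \<pi>2 :: "'a::finite \<Rightarrow> real" and \<mu> :: "'a \<times> 'a \<Rightarrow> real"
  assumes \<pi>1_pos: "\<And>x. \<pi>1 x > 0" and \<pi>2_pos: "\<And>y. \<pi>2 y > 0"
    and \<mu>_pos: "\<And>u. \<mu> u > 0" and \<mu>_sum: "(\<Sum>u\<in>UNIV. \<mu> u) = 1"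
    and pi_hat: "pi_hat (\<lambda>x x'. \<pi>1 x') (\<lambda>y y'. \<pi>2 y') f = (\<lambda>(u, w). \<mu> u * \<mu> w)"
  shows "J1 (\<lambda>x x'. \<pi>1 x') (\<lambda>y y'. \<pi>2 y') f = ereal (2 * rel_entropy \<mu> (\<lambda>(x, y). \<pi>1 x * \<pi>2 y)
    - rel_entropy (\<lambda>x. \<Sum>y\<in>UNIV. \<mu> (x, y)) \<pi>1)"
proof -
  define p where "p = (\<lambda>x. \<Sum>y\<in>UNIV. \<mu> (x, y))"
  have p_pos: "p x > 0" for x
    unfolding p_def using \<mu>_pos by (intro sum_pos) auto
  define l where "l = (\<lambda>x. ln (p x / \<pi>1 x))"
  define h where "h = (\<lambda>u. ln (\<pi>1 (fst u) * \<pi>2 (snd u) / \<mu> u) + l (fst u) / 2)"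
  have "J1 (\<lambda>x x'. \<pi>1 x') (\<lambda>y y'. \<pi>2 y') f = ereal (- 2 * integ \<mu> h)"
    unfolding J1_def pi_hat
  proof (rule two_copy_variational_formula[where \<nu> = "glue_fst \<mu>"])
    show "glue_fst \<mu> i > 0" for i
      using \<mu>_pos p_pos by (simp add: glue_fst_def p_def split: prod.split)
    show "integ (glue_fst \<mu>) (\<lambda>i. \<phi> (fst i, fst (snd i))) = integ \<mu> \<phi>"
      and "integ (glue_fst \<mu>) (\<lambda>i. \<phi> (fst i, snd (snd i))) = integ \<mu> \<phi>" for \<phi>
      using p_pos by (auto simp: p_def less_imp_neq[symmetric] integ_glue_fst)
    show "Phi1 (\<lambda>x x'. \<pi>1 x') (\<lambda>y y'. \<pi>2 y') g i j = glue_fst \<mu> j * exp (g ((fst i, fst (snd i)), (fst j, fst (snd j)))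
        + g ((fst i, snd (snd i)), (fst j, snd (snd j))) + h (fst j, fst (snd j)) + h (fst j, snd (snd j)))"
      for g i j
    proof -
      obtain x y z x' y' z' where ij: "i = (x, y, z)" "j = (x', y', z')"
        by (cases i, cases j) auto
      have exp_h: "exp (h (x', v)) = \<pi>1 x' * \<pi>2 v / \<mu> (x', v) * exp (l x' / 2)" for v
        using \<pi>1_pos \<pi>2_pos \<mu>_pos by (simp add: h_def exp_add)
      have "exp (l x' / 2) * exp (l x' / 2) = p x' / \<pi>1 x'"
        using p_pos \<pi>1_pos by (simp add: l_def flip: exp_add)
      then show ?thesis
        using \<pi>1_pos[of x'] \<mu>_pos[of "(x', y')"] \<mu>_pos[of "(x', z')"] p_pos[of x']
        by (simp add: ij Phi1_def glue_fst_def exp_add exp_h p_def field_simps)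
    qed
  qed (use \<mu>_sum in simp)
  also have "- 2 * integ \<mu> h = 2 * rel_entropy \<mu> (\<lambda>(x, y). \<pi>1 x * \<pi>2 y) - rel_entropy p \<pi>1"
  proof -
    have "ln (\<pi>1 (fst u) * \<pi>2 (snd u) / \<mu> u) = - ln (\<mu> u / (case u of (x, y) \<Rightarrow> \<pi>1 x * \<pi>2 y))" for u
      using \<pi>1_pos \<pi>2_pos \<mu>_pos by (simp add: ln_div case_prod_beta')
    then have "integ \<mu> h = - rel_entropy \<mu> (\<lambda>(x, y). \<pi>1 x * \<pi>2 y) + integ \<mu> (\<lambda>u. l (fst u)) / 2"
      by (simp add: h_def rel_entropy_eq_integ integ_def right_diff_distrib sum_subtractf sum_divide_distrib)
    moreover have "integ \<mu> (\<lambda>u. l (fst u)) = rel_entropy p \<pi>1"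
      unfolding rel_entropy_eq_integ l_def p_def by (rule integ_fst)
    ultimately show ?thesis
      by simp
  qed
  finally show ?thesis
    by (simp add: p_def)
qed

lemma J2_identical_rows:
  fixes \<pi>1 \<pi>2 :: "'a::finite \<Rightarrow> real" and \<mu> :: "'a \<times> 'a \<Rightarrow> real"
  assumes \<pi>1_pos: "\<And>x. \<pi>1 x > 0" and \<pi>2_pos: "\<And>y. \<pi>2 y > 0"
    and \<mu>_pos: "\<And>u. \<mu> u > 0" and \<mu>_sum: "(\<Sum>u\<in>UNIV. \<mu> u) = 1"
    and pi_hat: "pi_hat (\<lambda>x x'. \<pi>1 x') (\<lambda>y y'. \<pi>2 y') f = (\<lambda>(u, w). \<mu> u * \<mu> w)"
  shows "J2 (\<lambda>x x'. \<pi>1 x') (\<lambda>y y'. \<pi>2 y') f = ereal (2 * rel_entropy \<mu> (\<lambda>(x, y). \<pi>1 x * \<pi>2 y)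
    - rel_entropy (\<lambda>y. \<Sum>x\<in>UNIV. \<mu> (x, y)) \<pi>2)"
proof -
  define p where "p = (\<lambda>y. \<Sum>x\<in>UNIV. \<mu> (x, y))"
  have p_pos: "p y > 0" for y
    unfolding p_def using \<mu>_pos by (intro sum_pos) auto
  define l where "l = (\<lambda>y. ln (p y / \<pi>2 y))"
  define h where "h = (\<lambda>u. ln (\<pi>1 (fst u) * \<pi>2 (snd u) / \<mu> u) + l (snd u) / 2)"
  have "J2 (\<lambda>x x'. \<pi>1 x') (\<lambda>y y'. \<pi>2 y') f = ereal (- 2 * integ \<mu> h)"
    unfolding J2_def pi_hat
  proof (rule two_copy_variational_formula[where \<nu> = "glue_snd \<mu>"])
    show "glue_snd \<mu> i > 0" for i
      using \<mu>_pos p_pos by (simp add: glue_snd_def p_def split: prod.split)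
    show "integ (glue_snd \<mu>) (\<lambda>i. \<phi> (fst i, snd (snd i))) = integ \<mu> \<phi>"
      and "integ (glue_snd \<mu>) (\<lambda>i. \<phi> (snd i)) = integ \<mu> \<phi>" for \<phi>
      using p_pos by (auto simp: p_def less_imp_neq[symmetric] integ_glue_snd)
    show "Phi2 (\<lambda>x x'. \<pi>1 x') (\<lambda>y y'. \<pi>2 y') g i j = glue_snd \<mu> j * exp (g ((fst i, snd (snd i)), (fst j, snd (snd j)))
        + g (snd i, snd j) + h (fst j, snd (snd j)) + h (snd j))"
      for g i j
    proof -
      obtain x w y x' w' y' where ij: "i = (x, w, y)" "j = (x', w', y')"
        by (cases i, cases j) auto
      have exp_h: "exp (h (v, y')) = \<pi>1 v * \<pi>2 y' / \<mu> (v, y') * exp (l y' / 2)" for v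
        using \<pi>1_pos \<pi>2_pos \<mu>_pos by (simp add: h_def exp_add)
      have "exp (l y' / 2) * exp (l y' / 2) = p y' / \<pi>2 y'"
        using p_pos \<pi>2_pos by (simp add: l_def flip: exp_add)
      then show ?thesis
        using \<pi>2_pos[of y'] \<mu>_pos[of "(x', y')"] \<mu>_pos[of "(w', y')"] p_pos[of y']
        by (simp add: ij Phi2_def glue_snd_def exp_add exp_h p_def field_simps)
    qed
  qed (use \<mu>_sum in simp)
  also have "- 2 * integ \<mu> h = 2 * rel_entropy \<mu> (\<lambda>(x, y). \<pi>1 x * \<pi>2 y) - rel_entropy p \<pi>2"
  proof -
    have "ln (\<pi>1 (fst u) * \<pi>2 (snd u) / \<mu> u) = - ln (\<mu> u / (case u of (x, y) \<Rightarrow> \<pi>1 x * \<pi>2 y))" for u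
      using \<pi>1_pos \<pi>2_pos \<mu>_pos by (simp add: ln_div case_prod_beta')
    then have "integ \<mu> h = - rel_entropy \<mu> (\<lambda>(x, y). \<pi>1 x * \<pi>2 y) + integ \<mu> (\<lambda>u. l (snd u)) / 2"
      by (simp add: h_def rel_entropy_eq_integ integ_def right_diff_distrib sum_subtractf sum_divide_distrib)
    moreover have "integ \<mu> (\<lambda>u. l (snd u)) = rel_entropy p \<pi>2"
      unfolding rel_entropy_eq_integ l_def p_def by (rule integ_snd)
    ultimately show ?thesis
      by simp
  qed
  finally show ?thesis
    by (simp add: p_def)
qed

lemma varphi_identical_rows:
  fixes \<pi>1 \<pi>2 :: "'a::finite \<Rightarrow> real"
  assumes "\<And>x. \<pi>1 x > 0" and "\<And>y. \<pi>2 y > 0"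
  shows "varphi (\<lambda>x x'. \<pi>1 x') (\<lambda>y y'. \<pi>2 y') f \<theta>
    = (\<Sum>x\<in>UNIV. \<Sum>y\<in>UNIV. exp (\<theta> * real_of_int (f (x, y))) * \<pi>1 x * \<pi>2 y)"
proof -
  have "varphi (\<lambda>x x'. \<pi>1 x') (\<lambda>y y'. \<pi>2 y') f \<theta>
      = (\<Sum>w\<in>UNIV. exp (\<theta> * real_of_int (f w)) * \<pi>1 (fst w) * \<pi>2 (snd w))"
    unfolding varphi_def
    by (rule spectral_radius_identical_rows) (use assms in \<open>auto simp: Phi_def less_imp_le split: prod.split\<close>)
  then show ?thesis
    by (simp add: sum_UNIV_prod)
qed

lemma pi_star_identical_rows:
  fixes \<mu> :: "'a::finite \<times> 'a \<Rightarrow> real"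
  assumes Phi_rows: "\<And>u w. Phi P Q f (theta_star P Q f) u w = \<mu> w"
    and \<mu>_pos: "\<And>w. \<mu> w > 0" and \<mu>_sum: "(\<Sum>w\<in>UNIV. \<mu> w) = 1"
  shows "pi_star P Q f = \<mu>" and "pi_hat P Q f = (\<lambda>(u, w). \<mu> u * \<mu> w)"
proof -
  let ?r = "r_star P Q f"
  have "(\<forall>u. ?r u > 0) \<and> (\<forall>u. (\<Sum>w\<in>UNIV. Phi P Q f (theta_star P Q f) u w * ?r w) = ?r u)"
    unfolding r_star_def by (rule someI[of _ "\<lambda>_. 1"]) (simp add: Phi_rows \<mu>_sum)
  then have r_pos: "\<And>u. ?r u > 0" and r_eq: "\<And>u. (\<Sum>w\<in>UNIV. \<mu> w * ?r w) = ?r u"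
    unfolding Phi_rows by blast+
  have r_const: "?r w = ?r u" for u w
    using r_eq[of u] r_eq[of w] by linarith
  have R_eq: "R_star P Q f u w = \<mu> w" for u w
    using r_const[of w u] r_pos[of u] by (simp add: R_star_def Phi_rows)
  have stationary: "(\<Sum>u\<in>UNIV. p u * R_star P Q f u w) = (\<Sum>u\<in>UNIV. p u) * \<mu> w" for p w
    by (simp add: R_eq sum_distrib_right)
  have "(\<forall>u. pi_star P Q f u \<ge> 0) \<and> (\<Sum>u\<in>UNIV. pi_star P Q f u) = 1
      \<and> (\<forall>w. (\<Sum>u\<in>UNIV. pi_star P Q f u * R_star P Q f u w) = pi_star P Q f w)"
    unfolding pi_star_def
    by (rule someI[of _ \<mu>]) (intro conjI allI; simp add: stationary \<mu>_sum less_imp_le[OF \<mu>_pos])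
  then have pi_sum: "(\<Sum>u\<in>UNIV. pi_star P Q f u) = 1"
    and pi_fix: "\<And>w. (\<Sum>u\<in>UNIV. pi_star P Q f u * R_star P Q f u w) = pi_star P Q f w"
    by blast+
  show pi: "pi_star P Q f = \<mu>"
  proof
    show "pi_star P Q f w = \<mu> w" for w
      using pi_fix[of w] stationary[of "pi_star P Q f" w] pi_sum by simp
  qed
  show "pi_hat P Q f = (\<lambda>(u, w). \<mu> u * \<mu> w)"
    by (simp add: pi_hat_def pi R_eq)
qed

lemma rel_entropy_exp_tilt:
  assumes "\<And>z. \<nu> z > 0"
  shows "rel_entropy (\<lambda>z. exp (\<theta> * F z) * \<nu> z) \<nu> = \<theta> * integ (\<lambda>z. exp (\<theta> * F z) * \<nu> z) F"
proof -
  have "ln (exp (\<theta> * F z) * \<nu> z / \<nu> z) = \<theta> * F z" for z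
    using assms[of z] by simp
  then show ?thesis
    by (simp add: rel_entropy_def integ_def sum_distrib_left mult_ac)
qed

lemma theta_star_identical_rows:
  fixes \<pi>1 \<pi>2 :: "'a::finite \<Rightarrow> real" and f :: "'a \<times> 'a \<Rightarrow> int"
  assumes \<pi>1_pos: "\<And>x. \<pi>1 x > 0" and \<pi>1_sum: "(\<Sum>x\<in>UNIV. \<pi>1 x) = 1"
    and \<pi>2_pos: "\<And>y. \<pi>2 y > 0" and \<pi>2_sum: "(\<Sum>y\<in>UNIV. \<pi>2 y) = 1"
    and neg_mean: "(\<Sum>x\<in>UNIV. \<Sum>y\<in>UNIV. \<pi>1 x * \<pi>2 y * real_of_int (f (x, y))) < 0"
    and pos_somewhere: "\<exists>x y. f (x, y) > 0"
  defines "P \<equiv> \<lambda>x x'. \<pi>1 x'" and "Q \<equiv> \<lambda>y y'. \<pi>2 y'"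
  shows "\<exists>!\<theta>. \<theta> > 0 \<and> varphi P Q f \<theta> = 1" and "theta_star P Q f > 0"
    and "(\<Sum>x\<in>UNIV. \<Sum>y\<in>UNIV. exp (theta_star P Q f * real_of_int (f (x, y))) * \<pi>1 x * \<pi>2 y) = 1"
proof -
  obtain x0 y0 where "f (x0, y0) > 0"
    using pos_somewhere by blast
  have "\<exists>!\<theta>. \<theta> > 0 \<and> (\<Sum>k\<in>UNIV. \<pi>1 (fst k) * \<pi>2 (snd k) * exp (\<theta> * real_of_int (f k))) = 1"
  proof (rule exp_moment_unique_positive_root[where j = "(x0, y0)"])
    show "(\<Sum>k\<in>UNIV. \<pi>1 (fst k) * \<pi>2 (snd k)) = 1"
      using \<pi>1_sum \<pi>2_sum by (simp add: sum_UNIV_prod flip: sum_product)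
    show "(\<Sum>k\<in>UNIV. \<pi>1 (fst k) * \<pi>2 (snd k) * real_of_int (f k)) < 0"
      using neg_mean by (simp add: sum_UNIV_prod)
  qed (use \<pi>1_pos \<pi>2_pos \<open>f (x0, y0) > 0\<close> in auto)
  then show unique: "\<exists>!\<theta>. \<theta> > 0 \<and> varphi P Q f \<theta> = 1"
    unfolding P_def Q_def varphi_identical_rows[OF \<pi>1_pos \<pi>2_pos]
    by (simp add: sum_UNIV_prod mult_ac)
  then show "theta_star P Q f > 0"
    and "(\<Sum>x\<in>UNIV. \<Sum>y\<in>UNIV. exp (theta_star P Q f * real_of_int (f (x, y))) * \<pi>1 x * \<pi>2 y) = 1"
    using theI'[OF unique] unfolding theta_star_def P_def Q_def varphi_identical_rows[OF \<pi>1_pos \<pi>2_pos]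
    by simp_all
qed

theorem mainTheorem18:
  fixes \<pi>1 \<pi>2 :: "'a::finite \<Rightarrow> real" and f :: "'a \<times> 'a \<Rightarrow> int"
    and P Q :: "'a \<Rightarrow> 'a \<Rightarrow> real"
  assumes pos1: "\<forall>x. \<pi>1 x > 0" and sum1: "(\<Sum>x\<in>UNIV. \<pi>1 x) = 1"
    and pos2: "\<forall>y. \<pi>2 y > 0" and sum2: "(\<Sum>y\<in>UNIV. \<pi>2 y) = 1"
    and P_def: "P = (\<lambda>x x'. \<pi>1 x')" and Q_def: "Q = (\<lambda>y y'. \<pi>2 y')"
    and neg_mean: "(\<Sum>x\<in>UNIV. \<Sum>y\<in>UNIV. \<pi>1 x * \<pi>2 y * real_of_int (f (x, y))) < 0"
    and pos_somewhere: "\<exists>x y. f (x, y) > 0"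
  shows "(\<exists>!\<theta>. \<theta> > 0 \<and> varphi P Q f \<theta> = 1)
    \<and> theta_star P Q f > 0
    \<and> (\<Sum>x\<in>UNIV. \<Sum>y\<in>UNIV. exp (theta_star P Q f * real_of_int (f (x, y))) * \<pi>1 x * \<pi>2 y) = 1
    \<and> (\<forall>x y. pi_star P Q f (x, y) = exp (theta_star P Q f * real_of_int (f (x, y))) * \<pi>1 x * \<pi>2 y)
    \<and> (let \<theta> = theta_star P Q f; p = pi_star P Q f;
           pf = integ p (\<lambda>u. real_of_int (f u));
           p1 = (\<lambda>x. \<Sum>y\<in>UNIV. p (x, y)); p2 = (\<lambda>y. \<Sum>x\<in>UNIV. p (x, y))
       in J1 P Q f = ereal (2 * \<theta> * pf - rel_entropy p1 \<pi>1)
        \<and> J2 P Q f = ereal (2 * \<theta> * pf - rel_entropy p2 \<pi>2)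
        \<and> (2 * min (J1 P Q f) (J2 P Q f) > ereal (3 * \<theta> * pf)
           \<longleftrightarrow> rel_entropy p (\<lambda>(x, y). \<pi>1 x * \<pi>2 y)
                > 2 * max (rel_entropy p1 \<pi>1) (rel_entropy p2 \<pi>2)))"
proof -
  have \<pi>1_pos: "\<And>x. \<pi>1 x > 0" and \<pi>2_pos: "\<And>y. \<pi>2 y > 0"
    using pos1 pos2 by auto
  note theta = theta_star_identical_rows[OF \<pi>1_pos sum1 \<pi>2_pos sum2 neg_mean pos_somewhere, folded P_def Q_def]
  define \<theta> where "\<theta> = theta_star P Q f"
  define \<mu> where "\<mu> = (\<lambda>u. exp (\<theta> * real_of_int (f u)) * (case u of (x, y) \<Rightarrow> \<pi>1 x * \<pi>2 y))"
  have \<mu>_pos: "\<And>u. \<mu> u > 0" and \<mu>_sum: "(\<Sum>u\<in>UNIV. \<mu> u) = 1"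
    using \<pi>1_pos \<pi>2_pos theta(3) by (auto simp: \<mu>_def \<theta>_def sum_UNIV_prod mult_ac)
  have "Phi P Q f (theta_star P Q f) u w = \<mu> w" for u w
    by (auto simp: Phi_def P_def Q_def \<mu>_def \<theta>_def split: prod.split)
  note pi = pi_star_identical_rows[OF this \<mu>_pos \<mu>_sum]
  define pf where "pf = integ \<mu> (\<lambda>u. real_of_int (f u))"
  have H: "rel_entropy \<mu> (\<lambda>(x, y). \<pi>1 x * \<pi>2 y) = \<theta> * pf"
    unfolding \<mu>_def pf_def using \<pi>1_pos \<pi>2_pos by (intro rel_entropy_exp_tilt) (auto split: prod.split)
  have J1: "J1 P Q f = ereal (2 * \<theta> * pf - rel_entropy (\<lambda>x. \<Sum>y\<in>UNIV. \<mu> (x, y)) \<pi>1)"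
    using J1_identical_rows[OF \<pi>1_pos \<pi>2_pos \<mu>_pos \<mu>_sum, where f = f] pi(2) H
    by (simp add: P_def Q_def)
  have J2: "J2 P Q f = ereal (2 * \<theta> * pf - rel_entropy (\<lambda>y. \<Sum>x\<in>UNIV. \<mu> (x, y)) \<pi>2)"
    using J2_identical_rows[OF \<pi>1_pos \<pi>2_pos \<mu>_pos \<mu>_sum, where f = f] pi(2) H
    by (simp add: P_def Q_def)
  have "2 * min (ereal (2 * \<theta> * pf - a)) (ereal (2 * \<theta> * pf - b)) > ereal (3 * \<theta> * pf)
      \<longleftrightarrow> \<theta> * pf > 2 * max a b" for a b
    by (simp add: min_def max_def)
  then show ?thesis
    using theta unfolding Let_def pi(1) \<theta>_def[symmetric] pf_def[symmetric] J1 J2 H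
    by (simp add: \<mu>_def)
qed

end
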